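(* In the FHMA network described below with a fixed integer number of sub-bands $N\ge 2$, consider the normalized mean local delay $\frac{D(N)}{\log_2(1+\theta)}$ as a function of the SINR threshold $\theta>0$, and let $\theta_{\mathrm{opt}}$ denote its minimizer. (i) In the noise-limited regime (interference neglected, i.e. $D(N)=N\exp\left(\frac{\theta r_0^\alpha WN_0}{N}\right)$), $$\theta_{\mathrm{opt}}=\exp\left(\mathcal{W}\left(\frac{N}{r_0^{\alpha}WN_0}\right)\right)-1,$$ where $\mathcal{W}$ is the Lambert $\mathcal{W}$ function, i.e. $\mathcal{W}(z)e^{\mathcal{W}(z)}=z$. (ii) In the interference-limited regime (noise neglected, $N_0=0$), $$\theta_{\mathrm{opt}}\in\left(b_0^{-1/(\delta+1)}-1,\ b_0^{-1/\delta}\right),\qquad b_0=\lambda c_d r_0^d\delta C(\delta)(N-1)^{\delta-1}N^{-\delta}.$$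
   Context: Model: transmitters form a homogeneous Poisson point process $\Phi$ of intensity $\lambda>0$ in $\mathbb{R}^d$; the typical receiver is at the origin and its desired transmitter $x_0\in\Phi$ is at distance $r_0>0$; probabilities are under the Palm distribution at $x_0$. Time is slotted. Path loss $\kappa r^{-\alpha}$ with $\alpha>d$, $\delta=d/\alpha\in(0,1)$. Power fading coefficients are i.i.d. exponential with mean $1$ over transmitters and slots, independent of everything. Unit power, always backlogged transmitters. Bandwidth $W$, noise power spectral density $N_r$, $N_0=N_r/\kappa$, SINR threshold $\theta>0$. $c_d$ is the volume of the unit ball in $\mathbb{R}^d$, $C(\delta)=\Gamma(1+\delta)\Gamma(1-\delta)=\frac{\pi\delta}{\sin(\pi\delta)}$. FHMA with $N$ sub-bands: each transmitter $x$ independently picks a sub-band $\mathcal{S}_k(x)$ uniformly from $\{1,\dots,N\}$ in each slot $k$; $\mathrm{SINR}_k=\frac{h_{k,x_0}r_0^{-\alpha}}{WN_0/N+\sum_{x\in\Phi\setminus\{x_0\}}h_{k,x}|x|^{-\alpha}\mathbf{1}(\mathcal{S}_k(x)=\mathcal{S}_k(x_0))}$; a slot is successful if $\mathrm{SINR}_k>\theta$; the local delay is the number of slots until the $N$-th successful slot and $D(N)$ (depending on $\theta$) is its mean, which equals $N\exp\left(\frac{\lambda c_d r_0^d\theta^{\delta}C(\delta)}{(N-1)^{1-\delta}N^{\delta}}+\frac{\theta r_0^\alpha WN_0}{N}\right)$. The normalization by $\log_2(1+\theta)$ accounts for slot duration proportional to $1/\log_2(1+\theta)$. *)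

theory Defs
  imports "HOL-Analysis.Analysis"
begin

text \<open>Principal branch of the Lambert W function on [-1/e, inf):
  the unique w >= -1 with w * exp w = z.\<close>
definition lambertW :: "real \<Rightarrow> real" where
  "lambertW z = (THE w. w \<ge> -1 \<and> w * exp w = z)"

definition Cdelta :: "real \<Rightarrow> real" where
  "Cdelta \<delta> = Gamma (1 + \<delta>) * Gamma (1 - \<delta>)"

text \<open>Parameters: lam (intensity), d (dimension), alpha (path loss exponent),
  r0 (link distance), W (bandwidth), N0 (noise N_r / kappa).
  c_d = unit_ball_vol d, delta = d / alpha.\<close>
definition fhma_delay ::
  "real \<Rightarrow> nat \<Rightarrow> real \<Rightarrow> real \<Rightarrow> real \<Rightarrow> real \<Rightarrow> nat \<Rightarrow> real \<Rightarrow> real" where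
  "fhma_delay lam d \<alpha> r0 W N0 N \<theta> =
     (let \<delta> = real d / \<alpha> in
      real N * exp (lam * unit_ball_vol (real d) * r0 powr (real d) * \<theta> powr \<delta> * Cdelta \<delta>
                     / ((real N - 1) powr (1 - \<delta>) * real N powr \<delta>)
                   + \<theta> * r0 powr \<alpha> * W * N0 / real N))"

definition fhma_delay_noise :: "real \<Rightarrow> real \<Rightarrow> real \<Rightarrow> real \<Rightarrow> nat \<Rightarrow> real \<Rightarrow> real" where
  "fhma_delay_noise \<alpha> r0 W N0 N \<theta> = real N * exp (\<theta> * r0 powr \<alpha> * W * N0 / real N)"

definition normalized :: "(real \<Rightarrow> real) \<Rightarrow> real \<Rightarrow> real" where
  "normalized D \<theta> = D \<theta> / log 2 (1 + \<theta>)"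

definition minimizers :: "(real \<Rightarrow> real) \<Rightarrow> real set" where
  "minimizers f = {\<theta>. \<theta> > 0 \<and> (\<forall>t>0. f \<theta> \<le> f t)}"

end

theory Submission
  imports Defs
begin

text \<open>For \<open>\<theta> > 0\<close> both normalized delays have the form \<open>N ln 2 exp (G \<theta>)\<close> with
  \<open>G \<theta> = A \<theta>^\<delta> - ln (ln (1 + \<theta>))\<close>, where \<open>\<delta> = 1\<close> in the noise-limited case. With
  \<open>k \<theta> = (1 + \<theta>) ln (1 + \<theta>)\<close>, the derivative \<open>G' \<theta>\<close> has the sign of
  \<open>\<theta>^(\<delta> - 1) k \<theta> - 1 / (\<delta> A)\<close>, and \<open>\<theta>^(\<delta> - 1) k \<theta> = \<theta>^\<delta> (k \<theta> / \<theta>)\<close> is strictly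
  increasing because \<open>k \<theta> / \<theta>\<close> is. Hence the unique minimizer is the root of
  \<open>\<theta>^(\<delta> - 1) k \<theta> = 1 / (\<delta> A)\<close>. For \<open>\<delta> = 1\<close> the substitution \<open>1 + \<theta> = exp w\<close> turns
  this equation into \<open>w exp w = 1 / A\<close>, so \<open>w\<close> is the Lambert W value. In general
  \<open>\<theta> < k \<theta> < \<theta> (1 + \<theta>)\<close> squeezes \<open>\<theta>^(\<delta> - 1) k \<theta>\<close> between \<open>\<theta>^\<delta>\<close> and
  \<open>(1 + \<theta>)^(\<delta> + 1)\<close>, which brackets the root.\<close>

lemma DERIV_sign_change_imp_strict_min:
  fixes G g h :: "real \<Rightarrow> real"
  assumes "t0 > 0"
    and G': "\<And>x. x > 0 \<Longrightarrow> (G has_real_derivative g x * (h x - h t0)) (at x)"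
    and g_pos: "\<And>x. x > 0 \<Longrightarrow> g x > 0"
    and h: "strict_mono_on {0<..} h"
    and "x > 0" "x \<noteq> t0"
  shows "G t0 < G x"
proof -
  have cont: "continuous_on {a..b} G" if "a > 0" for a b
    using G' that by (intro DERIV_continuous_on[of _ _ "\<lambda>x. g x * (h x - h t0)"])
      (auto intro: has_field_derivative_at_within)
  have sign: "0 < y \<Longrightarrow> y < t0 \<Longrightarrow> g y * (h y - h t0) < 0"
     "t0 < y \<Longrightarrow> g y * (h y - h t0) > 0" for y
    using g_pos[of y] strict_mono_onD[OF h, of y t0] strict_mono_onD[OF h, of t0 y] \<open>t0 > 0\<close>
    by (auto simp: mult_pos_neg)
  consider "x < t0" | "t0 < x" using \<open>x \<noteq> t0\<close> by linarith
  then show ?thesis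
  proof cases
    case 1
    show ?thesis
      by (rule DERIV_neg_imp_decreasing_open[OF 1 _ cont[OF \<open>x > 0\<close>]])
        (use G' sign(1) \<open>x > 0\<close> in force)
  next
    case 2
    show ?thesis
      by (rule DERIV_pos_imp_increasing_open[OF 2 _ cont[OF \<open>t0 > 0\<close>]])
        (use G' sign(2) \<open>t0 > 0\<close> in \<open>meson less_trans\<close>)
  qed
qed

lemma minimizers_exp_eq_singleton:
  fixes F G :: "real \<Rightarrow> real"
  assumes "c > 0" "t0 > 0"
    and F: "\<And>x. x > 0 \<Longrightarrow> F x = c * exp (G x)"
    and G_lt: "\<And>x. x > 0 \<Longrightarrow> x \<noteq> t0 \<Longrightarrow> G t0 < G x"
  shows "minimizers F = {t0}"
proof -
  have F_lt: "F t0 < F x" if "x > 0" "x \<noteq> t0" for x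
    using G_lt[OF that] F[OF that(1)] F[OF \<open>t0 > 0\<close>] \<open>c > 0\<close> by simp
  show ?thesis
    unfolding minimizers_def
  proof safe
    fix x assume x: "x > 0" and min: "\<forall>t>0. F x \<le> F t"
    show "x = t0"
    proof (rule ccontr)
      assume "x \<noteq> t0"
      with F_lt[OF x this] min \<open>t0 > 0\<close> show False by (meson not_le)
    qed
  next
    fix t :: real assume "t > 0"
    then show "F t0 \<le> F t" using F_lt[of t] by (cases "t = t0") auto
  qed (use \<open>t0 > 0\<close> in simp)
qed

lemma mult_exp_strict_mono_on: "strict_mono_on {-1..} (\<lambda>x::real. x * exp x)"
proof (rule strict_mono_onI)
  fix x y :: real assume "x \<in> {-1..}" "x < y"
  show "x * exp x < y * exp y"
  proof (rule DERIV_pos_imp_increasing_open[OF \<open>x < y\<close>])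
    fix t assume "x < t" "t < y"
    then have "(1 + t) * exp t > 0" using \<open>x \<in> {-1..}\<close> by simp
    moreover have "((\<lambda>x. x * exp x) has_real_derivative (1 + t) * exp t) (at t)"
      by (auto intro!: derivative_eq_intros simp: algebra_simps)
    ultimately show "\<exists>d. ((\<lambda>x. x * exp x) has_real_derivative d) (at t) \<and> d > 0" by blast
  qed (intro continuous_intros)
qed

lemma lambertW_mult_exp:
  assumes "u \<ge> -1"
  shows "lambertW (u * exp u) = u"
  unfolding lambertW_def
proof (rule the_equality)
  fix w assume "w \<ge> -1 \<and> w * exp w = u * exp u"
  with assms show "w = u"
    using strict_mono_on_imp_inj_on[OF mult_exp_strict_mono_on] by (auto dest: inj_onD)
qed (use assms in simp)

lemma less_one_plus_mult_ln:
  fixes x :: real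
  assumes "x > 0"
  shows "x < (1 + x) * ln (1 + x)"
proof -
  define f where "f y = (1 + y) * ln (1 + y) - y" for y :: real
  have "f 0 < f x"
  proof (rule DERIV_pos_imp_increasing_open[OF \<open>x > 0\<close>])
    fix y :: real assume "0 < y" "y < x"
    then show "\<exists>d. (f has_real_derivative d) (at y) \<and> d > 0"
      unfolding f_def
      by (intro exI[of _ "ln (1 + y)"]) (auto intro!: derivative_eq_intros simp: field_simps)
  qed (auto simp: f_def intro!: continuous_intros)
  then show ?thesis by (simp add: f_def)
qed

lemma one_plus_mult_ln_div_strict_mono:
  "strict_mono_on {0<..} (\<lambda>x::real. (1 + x) * ln (1 + x) / x)"
proof (rule strict_mono_onI)
  fix x y :: real assume "x \<in> {0<..}" "x < y"
  show "(1 + x) * ln (1 + x) / x < (1 + y) * ln (1 + y) / y"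
  proof (rule DERIV_pos_imp_increasing[OF \<open>x < y\<close>])
    fix t assume "x \<le> t" "t \<le> y"
    with \<open>x \<in> {0<..}\<close> have "t > 0" by simp
    have D: "((\<lambda>t. (1 + t) * ln (1 + t) / t) has_real_derivative
            ((ln (1 + t) + 1) * t - (1 + t) * ln (1 + t)) / t\<^sup>2) (at t)"
      using \<open>t > 0\<close> by (auto intro!: derivative_eq_intros simp: power2_eq_square)
    have "((ln (1 + t) + 1) * t - (1 + t) * ln (1 + t)) / t\<^sup>2 = (t - ln (1 + t)) / t\<^sup>2"
      by (simp add: algebra_simps)
    with D have "((\<lambda>t. (1 + t) * ln (1 + t) / t) has_real_derivative (t - ln (1 + t)) / t\<^sup>2) (at t)"
      by simp
    moreover have "(t - ln (1 + t)) / t\<^sup>2 > 0"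
      using ln_add_one_self_less_self[OF \<open>t > 0\<close>] \<open>t > 0\<close> by simp
    ultimately show "\<exists>d. ((\<lambda>t. (1 + t) * ln (1 + t) / t) has_real_derivative d) (at t) \<and> d > 0"
      by blast
  qed
qed

lemma powr_mult_one_plus_mult_ln_eq:
  fixes x \<delta> :: real
  assumes "x > 0"
  shows "x powr (\<delta> - 1) * ((1 + x) * ln (1 + x)) = x powr \<delta> * ((1 + x) * ln (1 + x) / x)"
  using assms by (simp add: powr_diff)

lemma powr_mult_one_plus_mult_ln_bounds:
  fixes x \<delta> :: real
  assumes "x > 0"
  shows "x powr \<delta> < x powr (\<delta> - 1) * ((1 + x) * ln (1 + x))"
    and "x powr (\<delta> - 1) * ((1 + x) * ln (1 + x)) < x powr \<delta> * (1 + x)"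
proof -
  have "1 < (1 + x) * ln (1 + x) / x"
    using less_one_plus_mult_ln[OF assms] assms by simp
  from mult_strict_left_mono[OF this, of "x powr \<delta>"]
  show "x powr \<delta> < x powr (\<delta> - 1) * ((1 + x) * ln (1 + x))"
    unfolding powr_mult_one_plus_mult_ln_eq[OF assms] using assms by simp
  have "(1 + x) * ln (1 + x) < (1 + x) * x"
    using ln_add_one_self_less_self[OF assms] assms by simp
  then have "(1 + x) * ln (1 + x) / x < 1 + x"
    using assms by (simp add: divide_less_eq)
  from mult_strict_left_mono[OF this, of "x powr \<delta>"]
  show "x powr (\<delta> - 1) * ((1 + x) * ln (1 + x)) < x powr \<delta> * (1 + x)"
    unfolding powr_mult_one_plus_mult_ln_eq[OF assms] using assms by simp
qed

lemma powr_mult_one_plus_mult_ln_strict_mono: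
  fixes \<delta> :: real
  assumes "\<delta> > 0"
  shows "strict_mono_on {0<..} (\<lambda>x. x powr (\<delta> - 1) * ((1 + x) * ln (1 + x)))"
proof (rule strict_mono_onI)
  fix x y :: real assume "x \<in> {0<..}" "x < y"
  then have "x > 0" "y > 0" by simp_all
  have "x powr \<delta> * ((1 + x) * ln (1 + x) / x) < y powr \<delta> * ((1 + y) * ln (1 + y) / y)"
  proof (rule mult_strict_mono)
    show "x powr \<delta> < y powr \<delta>"
      using \<open>x > 0\<close> \<open>x < y\<close> \<open>\<delta> > 0\<close> by (simp add: powr_less_mono2)
    show "(1 + x) * ln (1 + x) / x < (1 + y) * ln (1 + y) / y"
      using strict_mono_onD[OF one_plus_mult_ln_div_strict_mono] \<open>x > 0\<close> \<open>x < y\<close> by simp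
  qed (use \<open>x > 0\<close> \<open>y > 0\<close> in simp_all)
  then show "x powr (\<delta> - 1) * ((1 + x) * ln (1 + x)) < y powr (\<delta> - 1) * ((1 + y) * ln (1 + y))"
    by (simp only: powr_mult_one_plus_mult_ln_eq[OF \<open>x > 0\<close>] powr_mult_one_plus_mult_ln_eq[OF \<open>y > 0\<close>])
qed

lemma powr_mult_one_plus_mult_ln_attains:
  fixes c \<delta> :: real
  assumes "c > 0" "\<delta> > 0"
  obtains t where "t > 0" "t powr (\<delta> - 1) * ((1 + t) * ln (1 + t)) = c"
proof -
  define h where "h = (\<lambda>x::real. x powr (\<delta> - 1) * ((1 + x) * ln (1 + x)))"
  define U where "U = c powr (1 / \<delta>)"
  have "U > 0" "U powr \<delta> = c"
    using assms by (simp_all add: U_def powr_powr)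
  then have hU: "c < h U"
    using powr_mult_one_plus_mult_ln_bounds(1)[of U \<delta>] by (simp add: h_def)
  define L where "L = min 1 ((c / 2) powr (1 / \<delta>))"
  have "L > 0" using assms by (simp add: L_def)
  have "L powr \<delta> \<le> ((c / 2) powr (1 / \<delta>)) powr \<delta>"
    using \<open>L > 0\<close> assms by (intro powr_mono2) (auto simp: L_def)
  also have "\<dots> = c / 2"
    using assms by (simp add: powr_powr)
  finally have "L powr \<delta> \<le> c / 2" .
  have "L powr \<delta> * (1 + L) \<le> L powr \<delta> * 2"
    by (intro mult_left_mono) (auto simp: L_def)
  also have "\<dots> \<le> c"
    using \<open>L powr \<delta> \<le> c / 2\<close> by simp
  finally have hL: "h L < c"
    using powr_mult_one_plus_mult_ln_bounds(2)[OF \<open>L > 0\<close>, of \<delta>] by (simp add: h_def)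
  have "L \<le> U"
  proof (rule ccontr)
    assume "\<not> L \<le> U"
    then have "h U < h L"
      using strict_mono_onD[OF powr_mult_one_plus_mult_ln_strict_mono[OF \<open>\<delta> > 0\<close>], of U L] \<open>U > 0\<close>
      by (simp add: h_def)
    with hL hU show False by simp
  qed
  moreover have "\<forall>x. L \<le> x \<and> x \<le> U \<longrightarrow> isCont h x"
    using \<open>L > 0\<close> by (auto simp: h_def intro!: continuous_intros)
  ultimately obtain t where "L \<le> t" "h t = c"
    using IVT[of h L c U] hL hU by auto
  moreover from \<open>L > 0\<close> \<open>L \<le> t\<close> have "t > 0" by simp
  ultimately show ?thesis
    using that unfolding h_def by blast
qed

lemma powr_neg_inverse_powr:
  fixes b e :: real
  assumes "b > 0" "e \<noteq> 0"
  shows "(b powr (- 1 / e)) powr e = 1 / b"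
proof -
  have "(b powr (- 1 / e)) powr e = b powr (- 1 / e * e)"
    by (rule powr_powr)
  also have "- 1 / e * e = - 1"
    using assms by simp
  finally show ?thesis
    using assms by (simp add: powr_minus_divide)
qed

lemma powr_mult_one_plus_mult_ln_root_bounds:
  fixes b \<delta> t :: real
  assumes "b > 0" "\<delta> > 0" "t > 0"
    and root: "t powr (\<delta> - 1) * ((1 + t) * ln (1 + t)) = 1 / b"
  shows "b powr (- 1 / (\<delta> + 1)) - 1 < t" "t < b powr (- 1 / \<delta>)"
proof -
  have "1 / b < t powr \<delta> * (1 + t)"
    using powr_mult_one_plus_mult_ln_bounds(2)[OF \<open>t > 0\<close>, of \<delta>] root by simp
  also have "\<dots> < (1 + t) powr \<delta> * (1 + t)"
    using \<open>t > 0\<close> \<open>\<delta> > 0\<close> by (intro mult_strict_right_mono powr_less_mono2) auto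
  also have "\<dots> = (1 + t) powr (\<delta> + 1)"
    using \<open>t > 0\<close> by (simp add: powr_add)
  finally have "(b powr (- 1 / (\<delta> + 1))) powr (\<delta> + 1) < (1 + t) powr (\<delta> + 1)"
    using powr_neg_inverse_powr[of b "\<delta> + 1"] assms by simp
  from powr_less_cancel2[OF _ _ _ this] show "b powr (- 1 / (\<delta> + 1)) - 1 < t"
    using assms by simp
  have "t powr \<delta> < (b powr (- 1 / \<delta>)) powr \<delta>"
    using powr_mult_one_plus_mult_ln_bounds(1)[OF \<open>t > 0\<close>, of \<delta>] root
      powr_neg_inverse_powr[of b \<delta>] assms by simp
  from powr_less_cancel2[OF \<open>\<delta> > 0\<close> \<open>t > 0\<close> _ this] show "t < b powr (- 1 / \<delta>)"
    using \<open>b > 0\<close> by simp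
qed

lemma has_real_derivative_ln_ln_one_plus:
  fixes x :: real
  assumes "x > 0"
  shows "((\<lambda>x. ln (ln (1 + x))) has_real_derivative 1 / ((1 + x) * ln (1 + x))) (at x)"
  using assms by (auto intro!: derivative_eq_intros simp: field_simps)

lemma minimizers_normalized_exp_powr:
  fixes D :: "real \<Rightarrow> real" and c A \<delta> :: real
  assumes "c > 0" "A > 0" "\<delta> > 0"
    and D: "\<And>\<theta>. \<theta> > 0 \<Longrightarrow> D \<theta> = c * exp (A * \<theta> powr \<delta>)"
  obtains t0 where "t0 > 0" "t0 powr (\<delta> - 1) * ((1 + t0) * ln (1 + t0)) = 1 / (\<delta> * A)"
    "minimizers (normalized D) = {t0}"
proof -
  define k where "k = (\<lambda>x::real. (1 + x) * ln (1 + x))"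
  define h where "h = (\<lambda>x::real. x powr (\<delta> - 1) * k x)"
  have "\<delta> * A > 0" using assms by simp
  then obtain t0 where "t0 > 0" and root: "t0 powr (\<delta> - 1) * ((1 + t0) * ln (1 + t0)) = 1 / (\<delta> * A)"
    using powr_mult_one_plus_mult_ln_attains[of "1 / (\<delta> * A)" \<delta>] \<open>\<delta> > 0\<close> by force
  then have h_t0: "h t0 = 1 / (\<delta> * A)" by (simp add: h_def k_def)
  have "minimizers (normalized D) = {t0}"
  proof (rule minimizers_exp_eq_singleton)
    show "c * ln 2 > 0" "t0 > 0" using \<open>c > 0\<close> \<open>t0 > 0\<close> by simp_all
    show "normalized D x = c * ln 2 * exp (A * x powr \<delta> - ln (ln (1 + x)))" if "x > 0" for x
      using that by (simp add: normalized_def D log_def exp_diff)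
    show "A * t0 powr \<delta> - ln (ln (1 + t0)) < A * x powr \<delta> - ln (ln (1 + x))"
      if "x > 0" "x \<noteq> t0" for x
    proof (rule DERIV_sign_change_imp_strict_min[OF \<open>t0 > 0\<close> _ _ _ that])
      fix y :: real assume "y > 0"
      then have "k y > 0" by (simp add: k_def)
      have "((\<lambda>x. A * x powr \<delta> - ln (ln (1 + x))) has_real_derivative
              \<delta> * A * y powr (\<delta> - 1) - 1 / k y) (at y)"
        unfolding k_def using \<open>y > 0\<close>
        by (auto intro!: derivative_eq_intros has_real_derivative_ln_ln_one_plus)
      moreover have "\<delta> * A * y powr (\<delta> - 1) - 1 / k y = \<delta> * A / k y * (h y - h t0)"
        using h_t0 \<open>k y > 0\<close> \<open>A > 0\<close> \<open>\<delta> > 0\<close> by (simp add: h_def field_simps)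
      ultimately show "((\<lambda>x. A * x powr \<delta> - ln (ln (1 + x))) has_real_derivative
                         \<delta> * A / k y * (h y - h t0)) (at y)"
        by simp
      show "\<delta> * A / k y > 0" using \<open>\<delta> * A > 0\<close> \<open>k y > 0\<close> by simp
    qed (simp add: h_def k_def powr_mult_one_plus_mult_ln_strict_mono \<open>\<delta> > 0\<close>)
  qed
  with \<open>t0 > 0\<close> root that show ?thesis by blast
qed

lemma minimizers_normalized_delay_noise:
  fixes r0 \<alpha> W N0 :: real and N :: nat
  assumes "r0 > 0" "W > 0" "N0 > 0" "N > 0"
  shows "minimizers (normalized (fhma_delay_noise \<alpha> r0 W N0 N))
           = {exp (lambertW (real N / (r0 powr \<alpha> * W * N0))) - 1}"
proof -
  define a where "a = r0 powr \<alpha> * W * N0 / real N"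
  have "a > 0" using assms by (simp add: a_def)
  have D: "fhma_delay_noise \<alpha> r0 W N0 N \<theta> = real N * exp (a * \<theta> powr 1)" if "\<theta> > 0" for \<theta>
    using that by (simp add: fhma_delay_noise_def a_def mult_ac)
  obtain t0 where "t0 > 0" and root: "t0 powr (1 - 1) * ((1 + t0) * ln (1 + t0)) = 1 / (1 * a)"
      and min: "minimizers (normalized (fhma_delay_noise \<alpha> r0 W N0 N)) = {t0}"
    by (rule minimizers_normalized_exp_powr[OF _ \<open>a > 0\<close> _ D]) (use assms in simp_all)
  define u where "u = ln (1 + t0)"
  have "u * exp u = 1 / a"
    using root \<open>t0 > 0\<close> by (simp add: u_def mult.commute)
  moreover have "u > 0" using \<open>t0 > 0\<close> by (simp add: u_def)
  ultimately have "lambertW (1 / a) = u"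
    using lambertW_mult_exp[of u] by simp
  with \<open>t0 > 0\<close> have "exp (lambertW (real N / (r0 powr \<alpha> * W * N0))) - 1 = t0"
    by (simp add: a_def u_def)
  with min show ?thesis by simp
qed

lemma minimizers_normalized_delay_interference:
  fixes lam r0 \<alpha> W :: real and d N :: nat
  assumes "lam > 0" "r0 > 0" "d \<ge> 1" "\<alpha> > real d" "N \<ge> 2"
  defines "\<delta> \<equiv> real d / \<alpha>"
  defines "b0 \<equiv> lam * unit_ball_vol (real d) * r0 powr (real d) * \<delta> * Cdelta \<delta>
                  * (real N - 1) powr (\<delta> - 1) * real N powr (- \<delta>)"
  shows "\<exists>\<theta>opt. minimizers (normalized (fhma_delay lam d \<alpha> r0 W 0 N)) = {\<theta>opt}
              \<and> b0 powr (- 1 / (\<delta> + 1)) - 1 < \<theta>opt \<and> \<theta>opt < b0 powr (- 1 / \<delta>)"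
proof -
  define A where "A = lam * unit_ball_vol (real d) * r0 powr (real d) * Cdelta \<delta>
                     / ((real N - 1) powr (1 - \<delta>) * real N powr \<delta>)"
  have "0 < \<delta>" "\<delta> < 1"
    using assms by (auto simp: \<delta>_def field_simps)
  then have "Cdelta \<delta> > 0" by (simp add: Cdelta_def)
  have "A > 0" using assms \<open>Cdelta \<delta> > 0\<close> by (simp add: A_def)
  have "(real N - 1) powr (\<delta> - 1) = 1 / (real N - 1) powr (1 - \<delta>)"
    using powr_minus_divide[of "real N - 1" "1 - \<delta>"] by simp
  then have b0_eq: "b0 = \<delta> * A"
    by (simp add: b0_def A_def powr_minus_divide)
  have D: "fhma_delay lam d \<alpha> r0 W 0 N \<theta> = real N * exp (A * \<theta> powr \<delta>)" for \<theta>
    unfolding fhma_delay_def Let_def \<delta>_def[symmetric] A_def by (simp add: ac_simps)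
  obtain t0 where "t0 > 0" and root: "t0 powr (\<delta> - 1) * ((1 + t0) * ln (1 + t0)) = 1 / (\<delta> * A)"
      and min: "minimizers (normalized (fhma_delay lam d \<alpha> r0 W 0 N)) = {t0}"
    by (rule minimizers_normalized_exp_powr[OF _ \<open>A > 0\<close> \<open>\<delta> > 0\<close> D]) (use assms in simp_all)
  have "b0 > 0" using \<open>A > 0\<close> \<open>\<delta> > 0\<close> by (simp add: b0_eq)
  with min powr_mult_one_plus_mult_ln_root_bounds[OF _ \<open>\<delta> > 0\<close> \<open>t0 > 0\<close> root[folded b0_eq]]
  show ?thesis by blast
qed

theorem theorem7:
  fixes lam r0 \<alpha> W N0 :: real and d N :: nat
  assumes "lam > 0" and "r0 > 0" and "d \<ge> 1" and "\<alpha> > real d"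
    and "W > 0" and "N0 > 0" and "N \<ge> 2"
  shows "(minimizers (normalized (fhma_delay_noise \<alpha> r0 W N0 N))
           = {exp (lambertW (real N / (r0 powr \<alpha> * W * N0))) - 1})
    \<and> (let \<delta> = real d / \<alpha>;
             b0 = lam * unit_ball_vol (real d) * r0 powr (real d) * \<delta> * Cdelta \<delta>
                  * (real N - 1) powr (\<delta> - 1) * real N powr (- \<delta>)
         in \<exists>\<theta>opt. minimizers (normalized (fhma_delay lam d \<alpha> r0 W 0 N)) = {\<theta>opt}
              \<and> b0 powr (- 1 / (\<delta> + 1)) - 1 < \<theta>opt \<and> \<theta>opt < b0 powr (- 1 / \<delta>))"
proof
  show "minimizers (normalized (fhma_delay_noise \<alpha> r0 W N0 N))
          = {exp (lambertW (real N / (r0 powr \<alpha> * W * N0))) - 1}"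
    using assms by (intro minimizers_normalized_delay_noise) simp_all
  show "let \<delta> = real d / \<alpha>;
            b0 = lam * unit_ball_vol (real d) * r0 powr (real d) * \<delta> * Cdelta \<delta>
                 * (real N - 1) powr (\<delta> - 1) * real N powr (- \<delta>)
        in \<exists>\<theta>opt. minimizers (normalized (fhma_delay lam d \<alpha> r0 W 0 N)) = {\<theta>opt}
             \<and> b0 powr (- 1 / (\<delta> + 1)) - 1 < \<theta>opt \<and> \<theta>opt < b0 powr (- 1 / \<delta>)"
    unfolding Let_def by (rule minimizers_normalized_delay_interference[OF assms(1-4,7)])
qed

end
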